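(* Consider Setting B with the regular nodes running Algorithm 2 (any graph sequence, any $f$-total Byzantine behavior). For $k\in\mathbb N$ and $0\le r\le k$ let $\Omega^{(r)}[k]=\{a^r\hat x_s[k-r]:s\in\mathcal S\cap\mathcal R\}$. Suppose that at some $k\in\mathbb N_+$, $\tau_i[k]=m$ for some $i\in(\mathcal V\setminus\mathcal S)\cap\mathcal R$ and $m\in\mathbb N_+$ (necessarily $m\le k$). Then $$\hat x_i[k]\in\mathrm{Conv}\Big(\bigcup_{r=1}^{m}\Omega^{(r)}[k]\Big),$$ where $\mathrm{Conv}$ denotes the convex hull.
   Context: Setting B. Scalar system $x[k+1]=ax[k]$, $a\in\mathbb R$, monitored by nodes $\mathcal V=\{1,\dots,N\}$ with measurements $y_i[k]=c_ix[k]$, $c_i\in\mathbb R$. Source set $\mathcal S=\{i\in\mathcal V:c_i\neq0\}$. Time-varying directed graphs $\mathcal G[k]=(\mathcal V,\mathcal E[k])$, $\mathcal N_i[k]=\{l\ne i:(l,i)\in\mathcal E[k]\}$; the union graph over an interval has the union of the edge sets. An unknown set $\mathcal A\subseteq\mathcal V$ of adversarial nodes with $|\mathcal A|\le f$ ($f$-total model; $\mathcal A$ may intersect $\mathcal S$); $\mathcal R=\mathcal V\setminus\mathcal A$ are regular. Adversaries are Byzantine: at each time they may send arbitrary, possibly different values (of both estimate and freshness index) to different out-neighbors, or send nothing, and may collude. At each time $k$, each node $l$ sends to its out-neighbors a pair (estimate, freshness index); regular $l$ sends its true $(\hat x_l[k],\tau_l[k])$. Algorithm 2 (executed by regular nodes).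 Regular source $i\in\mathcal S$: $\tau_i[k]=0$ for all $k$ and $\hat x_i[k+1]=a\hat x_i[k]+l_i(y_i[k]-c_i\hat x_i[k])$ with observer gain $l_i$. Regular non-source $i$: keeps $\hat x_i[k]$ (arbitrary initial), $\tau_i[k]\in\mathbb N\cup\{\omega\}$ with $\tau_i[0]=\omega$, and a list $\mathcal M_i$ of distinct node labels (initially empty, at most $2f+1$ entries, stored in $2f+1$ slots) with, for each $l\in\mathcal M_i$, a stored estimate $v_{i,l}$, stored index $d_{i,l}\in\mathbb N$ and time stamp $\phi_{i,l}$. At time $k$ let $\mathcal J_i[k]$ be the set of $l\in\mathcal N_i[k]$ whose reported index $\tau_l[k]$ lies in $\mathbb N$ and satisfies $\tau_l[k]\le k$. "Appending $l$ at time $k$" means: put $l$ in $\mathcal M_i$ (if absent), set $v_{i,l}=\hat x_l[k]$, $d_{i,l}=\tau_l[k]$ (reported values), $\phi_{i,l}=k$. Filtering update (F) at time $k$ (requires $|\mathcal M_i|=2f+1$): set $\tau_i[k+1]=\max_{l\in\mathcal M_i}d_{i,l}+1$; form $\bar x_{i,l}[k]=a^{k-\phi_{i,l}}v_{i,l}$ for $l\in\mathcal M_i$; discard the $f$ largest and $f$ smallest of these $2f+1$ values, call the remaining one $\bar x_i[k]$, and set $\hat x_i[k+1]=a\bar x_i[k]$. Case $\tau_i[k]=\omega$: let $\mathcal J'=\mathcal J_i[k]\setminus\mathcal M_i$. If $|\mathcal M_i|+|\mathcal J'|<2f+1$, append every $l\in\mathcal J'$, set $\tau_i[k+1]=\omega$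 and $\hat x_i[k+1]=a\hat x_i[k]$. Otherwise append the $2f+1-|\mathcal M_i|$ nodes of $\mathcal J'$ with smallest reported indices (ties broken arbitrarily) and perform (F). Case $\tau_i[k]\ne\omega$: for each $l\in\mathcal J_i[k]\cap\mathcal M_i$ with reported $\tau_l[k]<d_{i,l}$, append $l$ (refreshing its entries); then rank the nodes of $\mathcal M_i\cup(\mathcal J_i[k]\setminus\mathcal M_i)$ by index ($d_{i,l}$ for $l\in\mathcal M_i$, reported $\tau_l[k]$ otherwise), keep the $2f+1$ with smallest index (ties arbitrary), appending newcomers and deleting dropped nodes (a retained node keeps its storage slot; a newcomer occupies the slot of a dropped node), and perform (F). In all cases, after the step every stored $d_{i,l}$ is incremented by $1$, and $\mathcal M_i$, $v$, $\phi$ carry over to time $k+1$. *)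

theory Defs
  imports "HOL-Analysis.Analysis" "HOL-Library.Multiset"
begin

(* Freshness indices: nat option, where None encodes \<omega>.
  Messages: msg k l j is what node l sends to node j at time k:
  None = nothing sent, Some (x, t) = (estimate, freshness index). *)

definition Jset :: "(nat \<Rightarrow> ('n \<times> 'n) set) \<Rightarrow> (nat \<Rightarrow> 'n \<Rightarrow> 'n \<Rightarrow> (real \<times> nat option) option)
    \<Rightarrow> 'n \<Rightarrow> nat \<Rightarrow> 'n set" where
  "Jset E msg j k = {l. l \<noteq> j \<and> (l, j) \<in> E k \<and> (\<exists>y t. msg k l j = Some (y, Some t) \<and> t \<le> k)}"

(* Trimmed value: discard the f largest and f smallest of the 2f+1 values
  (i.e. entry f of the sorted list of values, with multiplicity). *)
definition trim_val :: "nat \<Rightarrow> real multiset \<Rightarrow> real" where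
  "trim_val f X = sorted_list_of_multiset X ! f"

definition filt :: "nat \<Rightarrow> real \<Rightarrow> nat \<Rightarrow> 'n set \<Rightarrow> ('n \<Rightarrow> real) \<Rightarrow> ('n \<Rightarrow> nat) \<Rightarrow> ('n \<Rightarrow> nat)
    \<Rightarrow> real \<times> nat option" where
  "filt f a k Ml v d phi =
     (a * trim_val f (image_mset (\<lambda>l. a ^ (k - phi l) * v l) (mset_set Ml)),
      Some (Max (d ` Ml) + 1))"

definition app_v :: "'n set \<Rightarrow> ('n \<Rightarrow> real) \<Rightarrow> ('n \<Rightarrow> real) \<Rightarrow> 'n \<Rightarrow> real" where
  "app_v U rx v = (\<lambda>l. if l \<in> U then rx l else v l)"
definition app_d :: "'n set \<Rightarrow> ('n \<Rightarrow> nat) \<Rightarrow> ('n \<Rightarrow> nat) \<Rightarrow> 'n \<Rightarrow> nat" where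
  "app_d U rt d = (\<lambda>l. if l \<in> U then rt l else d l)"
definition app_phi :: "'n set \<Rightarrow> nat \<Rightarrow> ('n \<Rightarrow> nat) \<Rightarrow> 'n \<Rightarrow> nat" where
  "app_phi U k phi = (\<lambda>l. if l \<in> U then k else phi l)"

(* One step (time k \<rightarrow> k+1) of Algorithm 2 at a regular non-source node.
  J: the set J_i[k]; rx, rt: reported estimates / indices (meaningful on J).
  State at time k: xh, tau, Ml (the list M_i), v, d, phi; primed: state at time k+1.
  Ties are broken arbitrarily (nondeterminism). *)
definition ns_step :: "nat \<Rightarrow> real \<Rightarrow> nat \<Rightarrow> 'n set \<Rightarrow> ('n \<Rightarrow> real) \<Rightarrow> ('n \<Rightarrow> nat)
    \<Rightarrow> real \<Rightarrow> nat option \<Rightarrow> 'n set \<Rightarrow> ('n \<Rightarrow> real) \<Rightarrow> ('n \<Rightarrow> nat) \<Rightarrow> ('n \<Rightarrow> nat)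
    \<Rightarrow> real \<Rightarrow> nat option \<Rightarrow> 'n set \<Rightarrow> ('n \<Rightarrow> real) \<Rightarrow> ('n \<Rightarrow> nat) \<Rightarrow> ('n \<Rightarrow> nat) \<Rightarrow> bool" where
  "ns_step f a k J rx rt xh tau Ml v d phi xh' tau' Ml' v' d' phi' \<longleftrightarrow>
    (\<exists>U N. v' = app_v U rx v \<and> phi' = app_phi U k phi
       \<and> d' = (\<lambda>l. app_d U rt d l + 1) \<and> Ml' = N \<and>
     (case tau of
        None \<Rightarrow>
          (card Ml + card (J - Ml) < 2 * f + 1 \<and> U = J - Ml \<and> N = Ml \<union> U
             \<and> xh' = a * xh \<and> tau' = None)
        \<or> (card Ml + card (J - Ml) \<ge> 2 * f + 1 \<and> U \<subseteq> J - Ml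
             \<and> card U = 2 * f + 1 - card Ml
             \<and> (\<forall>s\<in>U. \<forall>t\<in>(J - Ml) - U. rt s \<le> rt t)
             \<and> N = Ml \<union> U
             \<and> (xh', tau') = filt f a k N (app_v U rx v) (app_d U rt d) (app_phi U k phi))
      | Some _ \<Rightarrow>
          (let Rf = {l \<in> J \<inter> Ml. rt l < d l};
               d1 = app_d Rf rt d;
               C = Ml \<union> J;
               idx = (\<lambda>l. if l \<in> Ml then d1 l else rt l)
           in N \<subseteq> C \<and> card N = 2 * f + 1
              \<and> (\<forall>s\<in>N. \<forall>t\<in>C - N. idx s \<le> idx t)
              \<and> U = Rf \<union> (N - Ml)
              \<and> (xh', tau') = filt f a k N (app_v U rx v) (app_d U rt d) (app_phi U k phi))))"

(* Nodes: the finite type 'n (V = UNIV);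
  S = {i. c i \<noteq> 0}; Adv = adversarial set; gain = observer gains l_i.
  Adversaries' messages and internal variables are unconstrained. *)
definition alg2_exec :: "real \<Rightarrow> ('n \<Rightarrow> real) \<Rightarrow> ('n \<Rightarrow> real) \<Rightarrow> nat \<Rightarrow> 'n set
    \<Rightarrow> (nat \<Rightarrow> ('n \<times> 'n) set) \<Rightarrow> (nat \<Rightarrow> real)
    \<Rightarrow> (nat \<Rightarrow> 'n \<Rightarrow> 'n \<Rightarrow> (real \<times> nat option) option)
    \<Rightarrow> ('n \<Rightarrow> nat \<Rightarrow> real) \<Rightarrow> ('n \<Rightarrow> nat \<Rightarrow> nat option) \<Rightarrow> ('n \<Rightarrow> nat \<Rightarrow> 'n set)
    \<Rightarrow> ('n \<Rightarrow> nat \<Rightarrow> 'n \<Rightarrow> real) \<Rightarrow> ('n \<Rightarrow> nat \<Rightarrow> 'n \<Rightarrow> nat) \<Rightarrow> ('n \<Rightarrow> nat \<Rightarrow> 'n \<Rightarrow> nat) \<Rightarrow> bool" where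
  "alg2_exec a c gain f Adv E x msg xh tau M v d phi \<longleftrightarrow>
    (\<forall>k. x (Suc k) = a * x k) \<and>
    (\<forall>k l j. l \<notin> Adv \<longrightarrow> (l, j) \<in> E k \<longrightarrow> l \<noteq> j \<longrightarrow> msg k l j = Some (xh l k, tau l k)) \<and>
    (\<forall>s k. s \<notin> Adv \<longrightarrow> c s \<noteq> 0 \<longrightarrow>
        tau s k = Some 0 \<and> xh s (Suc k) = a * xh s k + gain s * (c s * x k - c s * xh s k)) \<and>
    (\<forall>j. j \<notin> Adv \<longrightarrow> c j = 0 \<longrightarrow>
        tau j 0 = None \<and> M j 0 = {} \<and>
        (\<forall>k. ns_step f a k (Jset E msg j k)
               (\<lambda>l. fst (the (msg k l j))) (\<lambda>l. the (snd (the (msg k l j))))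
               (xh j k) (tau j k) (M j k) (v j k) (d j k) (phi j k)
               (xh j (Suc k)) (tau j (Suc k)) (M j (Suc k)) (v j (Suc k)) (d j (Suc k)) (phi j (Suc k))))"

definition Omega :: "real \<Rightarrow> ('n \<Rightarrow> real) \<Rightarrow> 'n set \<Rightarrow> ('n \<Rightarrow> nat \<Rightarrow> real) \<Rightarrow> nat \<Rightarrow> nat \<Rightarrow> real set" where
  "Omega a c Adv xh r k = {a ^ r * xh s (k - r) | s. c s \<noteq> 0 \<and> s \<notin> Adv}"

end

theory Submission
  imports Defs
begin

text \<open>Every value a regular non-source node stores or computes at time \<open>k\<close> lies in the convex
hull of the sets \<open>\<Omega>\<^sup>(\<^sup>r\<^sup>)[k]\<close> with \<open>r\<close> bounded by the associated freshness index. This invariant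
is kept by each step: appending a regular in-neighbour stores a value satisfying it, advancing
time multiplies values by \<open>a\<close> and shifts \<open>r\<close> by one, and the trimmed value of \<open>2f+1\<close> stored
values, at most \<open>f\<close> of them adversarial, lies between two regular ones and hence in any convex
set containing all regular values.\<close>

lemma subset_mset_sum_meets_left:
  assumes "A \<subseteq># G + B" and "size B < size A"
  obtains y where "y \<in># A" and "y \<in># G"
proof -
  have "\<not> A \<subseteq># B" using assms(2) size_mset_mono by fastforce
  then obtain y where "count B y < count A y" by (meson not_le subseteq_mset_def)
  moreover have "count A y \<le> count G y + count B y" using assms(1) by (simp add: subseteq_mset_def)
  ultimately have "0 < count A y" and "0 < count G y" by linarith+
  then show ?thesis using that by (simp add: count_greater_zero_iff)
qed

lemma trim_val_between:
  fixes G B :: "real multiset"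
  assumes "size B \<le> f" and "2 * f + 1 \<le> size (G + B)"
  shows "\<exists>y\<in>#G. y \<le> trim_val f (G + B)" and "\<exists>y\<in>#G. trim_val f (G + B) \<le> y"
proof -
  define xs where "xs = sorted_list_of_multiset (G + B)"
  have mxs: "mset xs = G + B" and srt: "sorted xs" by (simp_all add: xs_def)
  have len: "2 * f + 1 \<le> length xs" using assms(2) mxs by (metis size_mset)
  have t: "trim_val f (G + B) = xs ! f" by (simp add: trim_val_def xs_def)
  have "mset (take (Suc f) xs) \<subseteq># G + B"
    by (metis append_take_drop_id mset_append mset_subset_eq_add_left mxs)
  moreover have "size B < size (mset (take (Suc f) xs))" using assms(1) len by simp
  ultimately obtain y where "y \<in> set (take (Suc f) xs)" "y \<in># G"
    by (metis subset_mset_sum_meets_left set_mset_mset)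
  moreover have "y \<le> xs ! f" if "y \<in> set (take (Suc f) xs)" for y
    using that srt len by (auto simp: in_set_conv_nth sorted_nth_mono)
  ultimately show "\<exists>y\<in>#G. y \<le> trim_val f (G + B)" using t by auto
  have "mset (drop f xs) \<subseteq># G + B"
    by (metis append_take_drop_id mset_append mset_subset_eq_add_right mxs)
  moreover have "size B < size (mset (drop f xs))" using assms(1) len by simp
  ultimately obtain y where "y \<in> set (drop f xs)" "y \<in># G"
    by (metis subset_mset_sum_meets_left set_mset_mset)
  moreover have "xs ! f \<le> y" if "y \<in> set (drop f xs)" for y
    using that srt len by (auto simp: in_set_conv_nth sorted_nth_mono)
  ultimately show "\<exists>y\<in>#G. trim_val f (G + B) \<le> y" using t by auto
qed

lemma trim_val_in_convex:
  fixes G B :: "real multiset"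
  assumes "size B \<le> f" and "2 * f + 1 \<le> size (G + B)"
    and "convex H" and "set_mset G \<subseteq> H"
  shows "trim_val f (G + B) \<in> H"
proof -
  obtain y1 y2 where "y1 \<in># G" "y2 \<in># G" "y1 \<le> trim_val f (G + B)" "trim_val f (G + B) \<le> y2"
    using trim_val_between[OF assms(1,2)] by blast
  moreover have "is_interval H" using assms(3) by (simp add: is_interval_convex_1)
  ultimately show ?thesis using assms(4) by (meson mem_is_interval_1_I subsetD)
qed

definition source_hull :: "real \<Rightarrow> ('n \<Rightarrow> real) \<Rightarrow> 'n set \<Rightarrow> ('n \<Rightarrow> nat \<Rightarrow> real)
    \<Rightarrow> nat set \<Rightarrow> nat \<Rightarrow> real set" where
  "source_hull a c Adv X R k = convex hull (\<Union>r\<in>R. Omega a c Adv X r k)"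

lemma source_hull_mono:
  "z \<in> source_hull a c Adv X R k \<Longrightarrow> R \<subseteq> R' \<Longrightarrow> z \<in> source_hull a c Adv X R' k"
  unfolding source_hull_def by (meson UN_mono hull_mono order_refl subsetD)

lemma source_hull_scale:
  assumes "z \<in> source_hull a c Adv X R k"
  shows "a * z \<in> source_hull a c Adv X (Suc ` R) (Suc k)"
proof -
  have shift: "(*\<^sub>R) a ` (\<Union>r\<in>R. Omega a c Adv X r k) \<subseteq> (\<Union>r\<in>Suc ` R. Omega a c Adv X r (Suc k))"
  proof
    fix w assume "w \<in> (*\<^sub>R) a ` (\<Union>r\<in>R. Omega a c Adv X r k)"
    then obtain r s where "r \<in> R" "c s \<noteq> 0" "s \<notin> Adv" "w = a ^ Suc r * X s (Suc k - Suc r)"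
      by (auto simp: Omega_def)
    then show "w \<in> (\<Union>r\<in>Suc ` R. Omega a c Adv X r (Suc k))" by (auto simp: Omega_def)
  qed
  have "a * z \<in> (*\<^sub>R) a ` source_hull a c Adv X R k" using assms by force
  also have "\<dots> = convex hull ((*\<^sub>R) a ` (\<Union>r\<in>R. Omega a c Adv X r k))"
    unfolding source_hull_def by (rule convex_hull_scaling[symmetric])
  also have "\<dots> \<subseteq> source_hull a c Adv X (Suc ` R) (Suc k)"
    unfolding source_hull_def by (rule hull_mono[OF shift])
  finally show ?thesis .
qed

definition stored_in_hull :: "real \<Rightarrow> ('n \<Rightarrow> real) \<Rightarrow> 'n set \<Rightarrow> ('n \<Rightarrow> nat \<Rightarrow> real) \<Rightarrow> nat
    \<Rightarrow> 'n set \<Rightarrow> ('n \<Rightarrow> real) \<Rightarrow> ('n \<Rightarrow> nat) \<Rightarrow> ('n \<Rightarrow> nat) \<Rightarrow> bool" where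
  "stored_in_hull a c Adv X k Ml v d phi \<longleftrightarrow>
     (\<forall>l\<in>Ml - Adv. phi l \<le> k \<and> a ^ (k - phi l) * v l \<in> source_hull a c Adv X {..d l} k)"

definition estimate_in_hull :: "real \<Rightarrow> ('n \<Rightarrow> real) \<Rightarrow> 'n set \<Rightarrow> ('n \<Rightarrow> nat \<Rightarrow> real) \<Rightarrow> nat
    \<Rightarrow> real \<Rightarrow> nat option \<Rightarrow> bool" where
  "estimate_in_hull a c Adv X k xh tau \<longleftrightarrow>
     (\<forall>m. tau = Some m \<longrightarrow> xh \<in> source_hull a c Adv X {1..m} k)"

lemma stored_in_hull_append:
  assumes "stored_in_hull a c Adv X k Ml v d phi"
    and "\<forall>l\<in>J - Adv. rx l \<in> source_hull a c Adv X {..rt l} k"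
    and "U \<subseteq> J" and "N \<subseteq> Ml \<union> U"
  shows "stored_in_hull a c Adv X k N (app_v U rx v) (app_d U rt d) (app_phi U k phi)"
  using assms unfolding stored_in_hull_def app_v_def app_d_def app_phi_def by auto

lemma stored_in_hull_Suc:
  assumes "stored_in_hull a c Adv X k Ml v d phi"
  shows "stored_in_hull a c Adv X (Suc k) Ml v (\<lambda>l. d l + 1) phi"
  unfolding stored_in_hull_def
proof
  fix l assume l: "l \<in> Ml - Adv"
  with assms have le: "phi l \<le> k"
    and "a ^ (k - phi l) * v l \<in> source_hull a c Adv X {..d l} k"
    by (auto simp: stored_in_hull_def)
  then have "a * (a ^ (k - phi l) * v l) \<in> source_hull a c Adv X {..d l + 1} (Suc k)"
    by (auto intro: source_hull_mono[OF source_hull_scale])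
  moreover have "a ^ (Suc k - phi l) * v l = a * (a ^ (k - phi l) * v l)"
    using le by (simp add: Suc_diff_le)
  ultimately show "phi l \<le> Suc k \<and> a ^ (Suc k - phi l) * v l \<in> source_hull a c Adv X {..d l + 1} (Suc k)"
    using le by (simp only:) simp
qed

lemma filt_in_source_hull:
  fixes N :: "'n::finite set"
  assumes "stored_in_hull a c Adv X k N v d phi"
    and "2 * f + 1 \<le> card N" and "card Adv \<le> f"
    and "filt f a k N v d phi = (x', Some m)"
  shows "x' \<in> source_hull a c Adv X {1..m} (Suc k)"
proof -
  define g where "g = (\<lambda>l. a ^ (k - phi l) * v l)"
  define Mx where "Mx = Max (d ` N)"
  have x': "x' = a * trim_val f (image_mset g (mset_set N))" and m: "m = Suc Mx"
    using assms(4) by (simp_all add: filt_def g_def Mx_def)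
  define G where "G = image_mset g (mset_set (N - Adv))"
  define B where "B = image_mset g (mset_set (N \<inter> Adv))"
  have GB: "image_mset g (mset_set N) = G + B"
  proof -
    have "mset_set N = mset_set ((N - Adv) \<union> (N \<inter> Adv))" by (simp add: Un_Diff_Int)
    also have "\<dots> = mset_set (N - Adv) + mset_set (N \<inter> Adv)" by (rule mset_set_Union) auto
    finally show ?thesis by (simp add: G_def B_def)
  qed
  have "size B \<le> f"
    using assms(3) card_mono[of Adv "N \<inter> Adv"] by (simp add: B_def)
  moreover have "2 * f + 1 \<le> size (G + B)"
    using assms(2) by (simp flip: GB)
  moreover have "set_mset G \<subseteq> source_hull a c Adv X {..Mx} k"
  proof
    fix y assume "y \<in># G"
    then obtain l where l: "l \<in> N - Adv" "y = g l" by (auto simp: G_def)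
    then have "y \<in> source_hull a c Adv X {..d l} k"
      using assms(1) by (auto simp: stored_in_hull_def g_def)
    then show "y \<in> source_hull a c Adv X {..Mx} k"
      by (rule source_hull_mono) (use l in \<open>auto simp: Mx_def\<close>)
  qed
  ultimately have "trim_val f (image_mset g (mset_set N)) \<in> source_hull a c Adv X {..Mx} k"
    unfolding GB by (intro trim_val_in_convex) (simp_all add: source_hull_def)
  then have "x' \<in> source_hull a c Adv X (Suc ` {..Mx}) (Suc k)"
    unfolding x' by (rule source_hull_scale)
  then show ?thesis by (rule source_hull_mono) (auto simp: m)
qed

text \<open>The invariant only depends on this bookkeeping of a step, not on how the selection
rules rank the candidates by freshness index.\<close>

lemma ns_step_cases:
  assumes "ns_step f a k J rx rt xh0 tau0 Ml v0 d0 phi0 xh1 tau1 Ml1 v1 d1 phi1"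
    and "finite Ml" and "finite J"
  obtains U N where "v1 = app_v U rx v0" "phi1 = app_phi U k phi0"
    "d1 = (\<lambda>l. app_d U rt d0 l + 1)" "Ml1 = N" "U \<subseteq> J" "N \<subseteq> Ml \<union> U"
    "tau1 = None \<or> (2 * f + 1 \<le> card N \<and>
       (xh1, tau1) = filt f a k N (app_v U rx v0) (app_d U rt d0) (app_phi U k phi0))"
proof (cases tau0)
  case None
  from assms(1) None obtain U N where upd: "v1 = app_v U rx v0" "phi1 = app_phi U k phi0"
      "d1 = (\<lambda>l. app_d U rt d0 l + 1)" "Ml1 = N"
    and "(U = J - Ml \<and> N = Ml \<union> U \<and> tau1 = None)
       \<or> (2 * f + 1 \<le> card Ml + card (J - Ml) \<and> U \<subseteq> J - Ml \<and> card U = 2 * f + 1 - card Ml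
          \<and> N = Ml \<union> U \<and> (xh1, tau1) = filt f a k N (app_v U rx v0) (app_d U rt d0) (app_phi U k phi0))"
    unfolding ns_step_def by auto
  then consider "U = J - Ml" "N = Ml \<union> U" "tau1 = None"
    | "2 * f + 1 \<le> card Ml + card (J - Ml)" "U \<subseteq> J - Ml" "card U = 2 * f + 1 - card Ml"
      "N = Ml \<union> U" "(xh1, tau1) = filt f a k N (app_v U rx v0) (app_d U rt d0) (app_phi U k phi0)"
    by blast
  then show ?thesis
  proof cases
    case 1
    with upd show ?thesis using that by blast
  next
    case 2
    have "finite U" using 2(2) assms(3) by (meson finite_Diff finite_subset)
    moreover have "Ml \<inter> U = {}" using 2(2) by blast
    ultimately have "card N = card Ml + card U"
      using 2(4) assms(2) by (simp add: card_Un_disjoint)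
    then have "2 * f + 1 \<le> card N" using 2(3) by linarith
    with 2 upd show ?thesis using that by blast
  qed
next
  case (Some t0)
  from assms(1) Some obtain U N where upd: "v1 = app_v U rx v0" "phi1 = app_phi U k phi0"
      "d1 = (\<lambda>l. app_d U rt d0 l + 1)" "Ml1 = N"
    and sel: "N \<subseteq> Ml \<union> J" "card N = 2 * f + 1" "U = {l \<in> J \<inter> Ml. rt l < d0 l} \<union> (N - Ml)"
    and "(xh1, tau1) = filt f a k N (app_v U rx v0) (app_d U rt d0) (app_phi U k phi0)"
    unfolding ns_step_def Let_def by auto
  moreover have "U \<subseteq> J" "N \<subseteq> Ml \<union> U" using sel by auto
  ultimately show ?thesis using that by simp
qed

lemma ns_step_preserves_hull:
  fixes Ml :: "'n::finite set"
  assumes "ns_step f a k J rx rt xh0 tau0 Ml v0 d0 phi0 xh1 tau1 Ml1 v1 d1 phi1"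
    and "card Adv \<le> f"
    and "\<forall>l\<in>J - Adv. rx l \<in> source_hull a c Adv X {..rt l} k"
    and "stored_in_hull a c Adv X k Ml v0 d0 phi0"
  shows "estimate_in_hull a c Adv X (Suc k) xh1 tau1"
    and "stored_in_hull a c Adv X (Suc k) Ml1 v1 d1 phi1"
proof -
  obtain U N where upd: "v1 = app_v U rx v0" "phi1 = app_phi U k phi0"
      "d1 = (\<lambda>l. app_d U rt d0 l + 1)" "Ml1 = N"
    and "U \<subseteq> J" "N \<subseteq> Ml \<union> U"
    and tau1: "tau1 = None \<or> (2 * f + 1 \<le> card N \<and>
       (xh1, tau1) = filt f a k N (app_v U rx v0) (app_d U rt d0) (app_phi U k phi0))"
    using ns_step_cases[OF assms(1) finite finite] by blast
  have stored: "stored_in_hull a c Adv X k N (app_v U rx v0) (app_d U rt d0) (app_phi U k phi0)"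
    using stored_in_hull_append[OF assms(4,3)] \<open>U \<subseteq> J\<close> \<open>N \<subseteq> Ml \<union> U\<close> by blast
  show "stored_in_hull a c Adv X (Suc k) Ml1 v1 d1 phi1"
    unfolding upd by (rule stored_in_hull_Suc[OF stored])
  show "estimate_in_hull a c Adv X (Suc k) xh1 tau1"
    unfolding estimate_in_hull_def
    using tau1 filt_in_source_hull[OF stored _ assms(2)] by auto
qed

lemma alg2_exec_in_hull:
  fixes c gain :: "'n::finite \<Rightarrow> real"
  assumes exec: "alg2_exec a c gain f Adv E x msg xh tau M v d phi" and "card Adv \<le> f"
    and "c j = 0" and "j \<notin> Adv"
  shows "estimate_in_hull a c Adv xh k (xh j k) (tau j k)"
    and "stored_in_hull a c Adv xh k (M j k) (v j k) (d j k) (phi j k)"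
proof -
  note alg = exec[unfolded alg2_exec_def]
  have msg_regular: "msg k l j = Some (xh l k, tau l k)"
    if "l \<notin> Adv" "(l, j) \<in> E k" "l \<noteq> j" for k l j
    using alg that by blast
  have tau_source: "tau s k = Some 0" if "s \<notin> Adv" "c s \<noteq> 0" for s k
    using alg that by blast
  have init: "tau j 0 = None \<and> M j 0 = {}" if "j \<notin> Adv" "c j = 0" for j
    using alg that by blast
  have "\<forall>j. j \<notin> Adv \<longrightarrow> c j = 0 \<longrightarrow> estimate_in_hull a c Adv xh k (xh j k) (tau j k)
          \<and> stored_in_hull a c Adv xh k (M j k) (v j k) (d j k) (phi j k)"
  proof (induction k)
    case 0
    then show ?case using init by (simp add: estimate_in_hull_def stored_in_hull_def)
  next
    case (Suc k)
    show ?case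
    proof (intro allI impI)
      fix j assume j: "j \<notin> Adv" "c j = 0"
      have reports: "\<forall>l\<in>Jset E msg j k - Adv. fst (the (msg k l j))
                        \<in> source_hull a c Adv xh {..the (snd (the (msg k l j)))} k"
      proof
        fix l assume l: "l \<in> Jset E msg j k - Adv"
        then obtain t where t: "msg k l j = Some (xh l k, Some t)" "tau l k = Some t"
          using msg_regular[of l j k] by (auto simp: Jset_def)
        show "fst (the (msg k l j)) \<in> source_hull a c Adv xh {..the (snd (the (msg k l j)))} k"
        proof (cases "c l = 0")
          case True
          with Suc.IH l t have "xh l k \<in> source_hull a c Adv xh {1..t} k"
            by (auto simp: estimate_in_hull_def)
          then show ?thesis using t by (auto intro: source_hull_mono)
        next
          case False
          with tau_source[of l k] l t have "t = 0" by simp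
          moreover have "xh l k \<in> Omega a c Adv xh 0 k" using False l by (auto simp: Omega_def)
          ultimately show ?thesis using t by (auto simp: source_hull_def intro: hull_inc)
        qed
      qed
      have step: "ns_step f a k (Jset E msg j k)
          (\<lambda>l. fst (the (msg k l j))) (\<lambda>l. the (snd (the (msg k l j))))
          (xh j k) (tau j k) (M j k) (v j k) (d j k) (phi j k)
          (xh j (Suc k)) (tau j (Suc k)) (M j (Suc k)) (v j (Suc k)) (d j (Suc k)) (phi j (Suc k))"
        using alg j by blast
      have "stored_in_hull a c Adv xh k (M j k) (v j k) (d j k) (phi j k)" using Suc.IH j by blast
      from ns_step_preserves_hull[OF step assms(2) reports this]
      show "estimate_in_hull a c Adv xh (Suc k) (xh j (Suc k)) (tau j (Suc k))
          \<and> stored_in_hull a c Adv xh (Suc k) (M j (Suc k)) (v j (Suc k)) (d j (Suc k)) (phi j (Suc k))"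
        by blast
    qed
  qed
  with assms(3,4) show "estimate_in_hull a c Adv xh k (xh j k) (tau j k)"
    and "stored_in_hull a c Adv xh k (M j k) (v j k) (d j k) (phi j k)" by blast+
qed

theorem lemma7:
  fixes a :: real and c gain :: "'n::finite \<Rightarrow> real" and f :: nat and Adv :: "'n set"
    and E :: "nat \<Rightarrow> ('n \<times> 'n) set" and x :: "nat \<Rightarrow> real"
    and msg :: "nat \<Rightarrow> 'n \<Rightarrow> 'n \<Rightarrow> (real \<times> nat option) option"
    and xh :: "'n \<Rightarrow> nat \<Rightarrow> real" and tau :: "'n \<Rightarrow> nat \<Rightarrow> nat option"
    and M :: "'n \<Rightarrow> nat \<Rightarrow> 'n set" and v :: "'n \<Rightarrow> nat \<Rightarrow> 'n \<Rightarrow> real"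
    and d phi :: "'n \<Rightarrow> nat \<Rightarrow> 'n \<Rightarrow> nat"
    and i :: 'n and k m :: nat
  assumes "alg2_exec a c gain f Adv E x msg xh tau M v d phi"
    and "card Adv \<le> f"
    and "c i = 0" and "i \<notin> Adv"
    and "k > 0" and "m > 0" and "tau i k = Some m"
  shows "xh i k \<in> convex hull (\<Union>r\<in>{1..m}. Omega a c Adv xh r k)"
  using alg2_exec_in_hull(1)[OF assms(1-4), of k] assms(7)
  by (simp add: estimate_in_hull_def source_hull_def)

end
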